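(* Let $k\in\mathbb{Z}$ with $k<-2$ and put $j=k/2$. Then $D^{k,1}_0\cong D^{+,k}_{k/2}/W^+_{k/2}$ and $D^{k,-1}_0\cong D^{-,k}_{k/2}/W^-_{k/2}$, where $W^\pm_{k/2}\subset D^{\pm,k}_{k/2}$ is the $\mathcal{U}(\widehat{\mathfrak{sl}}_2)$-submodule generated by $J^\mp_{-1}(1\otimes|k/2,0\rangle_\pm)$.
   Context: $\mathfrak{sl}_2$ has basis $J^+,J^-,J^0$ with $[J^+,J^-]=J^0$, $[J^0,J^\pm]=\pm2J^\pm$. For $j\in-\tfrac12\mathbb{N}$, $D^+_j$ is the $\mathfrak{sl}_2$-module with basis $\{|j,m\rangle_+\}_{m\ge0}$, $J^0|j,m\rangle_+=2(m-j)|j,m\rangle_+$, $J^+|j,m\rangle_+=\sqrt{(m+1)(m-2j)}|j,m+1\rangle_+$, $J^-|j,m\rangle_+=-\sqrt{m(m-1-2j)}|j,m-1\rangle_+$; $D^-_j$ has basis $\{|j,m\rangle_-\}_{m\ge0}$, $J^0|j,m\rangle_-=2(j-m)|j,m\rangle_-$, $J^+|j,m\rangle_-=-\sqrt{m(m-1-2j)}|j,m-1\rangle_-$, $J^-|j,m\rangle_-=\sqrt{(m+1)(m-2j)}|j,m+1\rangle_-$; $D_0=\mathbb{C}$ is the trivial module. $\widehat{\mathfrak{sl}}_2$ has generators $J^a_n$ ($a\in\{+,-,0\}$, $n\in\mathbb{Z}$), $K$, $d$ with $[J^+_m,J^-_n]=J^0_{m+n}+Km\delta_{m+n,0}$, $[J^0_m,J^\pm_n]=\pm2J^\pm_{m+n}$,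 $[J^0_m,J^0_n]=2Km\delta_{m+n,0}$, $[J^\pm_m,J^\pm_n]=0$, $[d,J^a_n]=nJ^a_n$, $K$ central; $J^a_0$ is identified with $J^a$. With $\mathfrak{r}_+=\mathrm{span}\{J^a_n:n\ge1\}$, $\mathfrak{k}=\mathrm{span}\{J^a_0,K,d\}$, the prolongation of $V\in\{D^\pm_j,D_0\}$ at level $k\neq-2$ is $V^k=\mathcal{U}(\widehat{\mathfrak{sl}}_2)\otimes_{\mathcal{U}(\mathfrak{k}\oplus\mathfrak{r}_+)}V^{(k)}$, where on $V^{(k)}=V$ the element $K$ acts as $k$, $\mathfrak{r}_+$ as $0$, and $d$ by the scalar $-\frac{j(j+1)}{k+2}$ (for $D^\pm_j$) resp. $0$ (for $D_0$). Write $D^{\pm,k}_j=(D^\pm_j)^k$. The spectral flow automorphism $\vartheta_s$ ($s\in\mathbb{Z}$) is $J^\pm_n\mapsto J^\pm_{n\mp s}$, $J^0_n\mapsto J^0_n-sK\delta_{n,0}$, $K\mapsto K$, $d\mapsto d+\frac s2J^0_0-\frac{s^2}4K$; for a module $(W,\rho)$, $W^s=(W,\rho\circ\vartheta_s)$, and $D^{k,s}_0=((D_0)^k)^s$. *)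

theory Defs
  imports Complex_Main
begin

datatype gen = Jp int | Jm int | J0 int | Kc | Dd

text \<open>A module for the affine algebra, carried by a subspace A of an ambient complex
vector space (scalar multiplication scale), given by the action of the generators;
each generator acts linearly on A, preserves A, and the defining brackets hold on A.\<close>
definition aff_module :: "(complex \<Rightarrow> 'u::ab_group_add \<Rightarrow> 'u) \<Rightarrow> 'u set \<Rightarrow> (gen \<Rightarrow> 'u \<Rightarrow> 'u) \<Rightarrow> bool" where
  "aff_module scale A \<rho> \<longleftrightarrow>
     module.subspace scale A \<and>
     (\<forall>x. \<forall>v\<in>A. \<rho> x v \<in> A) \<and>
     (\<forall>x. \<forall>u\<in>A. \<forall>v\<in>A. \<rho> x (u + v) = \<rho> x u + \<rho> x v) \<and>
     (\<forall>x c. \<forall>v\<in>A. \<rho> x (scale c v) = scale c (\<rho> x v)) \<and>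
     (\<forall>v\<in>A. \<forall>m n.
        \<rho> (Jp m) (\<rho> (Jm n) v) - \<rho> (Jm n) (\<rho> (Jp m) v)
          = \<rho> (J0 (m + n)) v + (if m + n = 0 then scale (of_int m) (\<rho> Kc v) else 0) \<and>
        \<rho> (J0 m) (\<rho> (Jp n) v) - \<rho> (Jp n) (\<rho> (J0 m) v) = scale 2 (\<rho> (Jp (m + n)) v) \<and>
        \<rho> (J0 m) (\<rho> (Jm n) v) - \<rho> (Jm n) (\<rho> (J0 m) v) = scale (-2) (\<rho> (Jm (m + n)) v) \<and>
        \<rho> (J0 m) (\<rho> (J0 n) v) - \<rho> (J0 n) (\<rho> (J0 m) v)
          = (if m + n = 0 then scale (2 * of_int m) (\<rho> Kc v) else 0) \<and>
        \<rho> (Jp m) (\<rho> (Jp n) v) = \<rho> (Jp n) (\<rho> (Jp m) v) \<and>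
        \<rho> (Jm m) (\<rho> (Jm n) v) = \<rho> (Jm n) (\<rho> (Jm m) v)) \<and>
     (\<forall>v\<in>A. \<forall>n.
        \<rho> Dd (\<rho> (Jp n) v) - \<rho> (Jp n) (\<rho> Dd v) = scale (of_int n) (\<rho> (Jp n) v) \<and>
        \<rho> Dd (\<rho> (Jm n) v) - \<rho> (Jm n) (\<rho> Dd v) = scale (of_int n) (\<rho> (Jm n) v) \<and>
        \<rho> Dd (\<rho> (J0 n) v) - \<rho> (J0 n) (\<rho> Dd v) = scale (of_int n) (\<rho> (J0 n) v)) \<and>
     (\<forall>v\<in>A. \<forall>x. \<rho> Kc (\<rho> x v) = \<rho> x (\<rho> Kc v))"

definition aff_hom :: "(complex \<Rightarrow> 'u::ab_group_add \<Rightarrow> 'u) \<Rightarrow> 'u set \<Rightarrow> (gen \<Rightarrow> 'u \<Rightarrow> 'u)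
     \<Rightarrow> 'u set \<Rightarrow> (gen \<Rightarrow> 'u \<Rightarrow> 'u) \<Rightarrow> ('u \<Rightarrow> 'u) \<Rightarrow> bool" where
  "aff_hom scale A \<rho> B \<sigma> \<phi> \<longleftrightarrow>
     (\<forall>v\<in>A. \<phi> v \<in> B) \<and>
     (\<forall>u\<in>A. \<forall>v\<in>A. \<phi> (u + v) = \<phi> u + \<phi> v) \<and>
     (\<forall>c. \<forall>v\<in>A. \<phi> (scale c v) = scale c (\<phi> v)) \<and>
     (\<forall>x. \<forall>v\<in>A. \<phi> (\<rho> x v) = \<sigma> x (\<phi> v))"

definition gen_submodule :: "(complex \<Rightarrow> 'u::ab_group_add \<Rightarrow> 'u) \<Rightarrow> 'u set \<Rightarrow> (gen \<Rightarrow> 'u \<Rightarrow> 'u) \<Rightarrow> 'u \<Rightarrow> 'u set" where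
  "gen_submodule scale A \<rho> w =
     \<Inter>{S. S \<subseteq> A \<and> module.subspace scale S \<and> (\<forall>x. \<forall>v\<in>S. \<rho> x v \<in> S) \<and> w \<in> S}"

text \<open>Conditions saying that the vectors f m (m in nat) transform, under the subalgebra
k + r_+, as the basis vectors |j,m>_+ of D^+_j inside the level-k prolongation:
J^a_0 acts as on D^+_j, K acts by k, J^a_n (n >= 1) act by 0, d by -j(j+1)/(k+2).\<close>
definition rel_Dplus :: "(complex \<Rightarrow> 'u::ab_group_add \<Rightarrow> 'u) \<Rightarrow> real \<Rightarrow> int
     \<Rightarrow> (gen \<Rightarrow> 'u \<Rightarrow> 'u) \<Rightarrow> (nat \<Rightarrow> 'u) \<Rightarrow> bool" where
  "rel_Dplus scale j k \<rho> f \<longleftrightarrow> (\<forall>m::nat.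
     \<rho> (J0 0) (f m) = scale (of_real (2 * (real m - j))) (f m) \<and>
     \<rho> (Jp 0) (f m) = scale (of_real (sqrt ((real m + 1) * (real m - 2 * j)))) (f (m + 1)) \<and>
     \<rho> (Jm 0) (f m) = scale (of_real (- sqrt (real m * (real m - 1 - 2 * j)))) (f (m - 1)) \<and>
     \<rho> Kc (f m) = scale (of_int k) (f m) \<and>
     (\<forall>n\<ge>1. \<rho> (Jp n) (f m) = 0 \<and> \<rho> (Jm n) (f m) = 0 \<and> \<rho> (J0 n) (f m) = 0) \<and>
     \<rho> Dd (f m) = scale (of_real (- (j * (j + 1) / (real_of_int k + 2)))) (f m))"

definition rel_Dminus :: "(complex \<Rightarrow> 'u::ab_group_add \<Rightarrow> 'u) \<Rightarrow> real \<Rightarrow> int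
     \<Rightarrow> (gen \<Rightarrow> 'u \<Rightarrow> 'u) \<Rightarrow> (nat \<Rightarrow> 'u) \<Rightarrow> bool" where
  "rel_Dminus scale j k \<rho> f \<longleftrightarrow> (\<forall>m::nat.
     \<rho> (J0 0) (f m) = scale (of_real (2 * (j - real m))) (f m) \<and>
     \<rho> (Jp 0) (f m) = scale (of_real (- sqrt (real m * (real m - 1 - 2 * j)))) (f (m - 1)) \<and>
     \<rho> (Jm 0) (f m) = scale (of_real (sqrt ((real m + 1) * (real m - 2 * j)))) (f (m + 1)) \<and>
     \<rho> Kc (f m) = scale (of_int k) (f m) \<and>
     (\<forall>n\<ge>1. \<rho> (Jp n) (f m) = 0 \<and> \<rho> (Jm n) (f m) = 0 \<and> \<rho> (J0 n) (f m) = 0) \<and>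
     \<rho> Dd (f m) = scale (of_real (- (j * (j + 1) / (real_of_int k + 2)))) (f m))"

definition rel_D0 :: "(complex \<Rightarrow> 'u::ab_group_add \<Rightarrow> 'u) \<Rightarrow> int
     \<Rightarrow> (gen \<Rightarrow> 'u \<Rightarrow> 'u) \<Rightarrow> (unit \<Rightarrow> 'u) \<Rightarrow> bool" where
  "rel_D0 scale k \<rho> f \<longleftrightarrow> (\<forall>i.
     (\<forall>n\<ge>0. \<rho> (Jp n) (f i) = 0 \<and> \<rho> (Jm n) (f i) = 0 \<and> \<rho> (J0 n) (f i) = 0) \<and>
     \<rho> Kc (f i) = scale (of_int k) (f i) \<and>
     \<rho> Dd (f i) = 0)"

text \<open>(A, rho) with the family e (images of the basis of V^(k)) is the prolongation
U(g) \<otimes>_{U(k + r_+)} V^(k): characterized by its universal property as the induced module,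
with respect to all modules carried by subspaces of the ambient space.\<close>
definition is_prolongation :: "(complex \<Rightarrow> 'u::ab_group_add \<Rightarrow> 'u) \<Rightarrow> 'u set \<Rightarrow> (gen \<Rightarrow> 'u \<Rightarrow> 'u)
     \<Rightarrow> ('i \<Rightarrow> 'u) \<Rightarrow> ((gen \<Rightarrow> 'u \<Rightarrow> 'u) \<Rightarrow> ('i \<Rightarrow> 'u) \<Rightarrow> bool) \<Rightarrow> bool" where
  "is_prolongation scale A \<rho> e R \<longleftrightarrow>
     aff_module scale A \<rho> \<and> (\<forall>i. e i \<in> A) \<and> R \<rho> e \<and>
     (\<forall>B \<sigma> f. aff_module scale B \<sigma> \<and> (\<forall>i. f i \<in> B) \<and> R \<sigma> f \<longrightarrow>
        (\<exists>\<phi>. aff_hom scale A \<rho> B \<sigma> \<phi> \<and> (\<forall>i. \<phi> (e i) = f i)) \<and>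
        (\<forall>\<phi> \<psi>. aff_hom scale A \<rho> B \<sigma> \<phi> \<and> (\<forall>i. \<phi> (e i) = f i) \<and>
                aff_hom scale A \<rho> B \<sigma> \<psi> \<and> (\<forall>i. \<psi> (e i) = f i) \<longrightarrow>
                (\<forall>v\<in>A. \<phi> v = \<psi> v)))"

definition spectral_flow :: "(complex \<Rightarrow> 'u::ab_group_add \<Rightarrow> 'u) \<Rightarrow> int \<Rightarrow> (gen \<Rightarrow> 'u \<Rightarrow> 'u) \<Rightarrow> gen \<Rightarrow> 'u \<Rightarrow> 'u" where
  "spectral_flow scale s \<rho> x v = (case x of
      Jp n \<Rightarrow> \<rho> (Jp (n - s)) v
    | Jm n \<Rightarrow> \<rho> (Jm (n + s)) v
    | J0 n \<Rightarrow> \<rho> (J0 n) v - (if n = 0 then scale (of_int s) (\<rho> Kc v) else 0)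
    | Kc \<Rightarrow> \<rho> Kc v
    | Dd \<Rightarrow> \<rho> Dd v + scale (of_int s / 2) (\<rho> (J0 0) v) - scale ((of_int s)\<^sup>2 / 4) (\<rho> Kc v))"

end

theory Submission
  imports Defs
begin

text \<open>
  The vacuum v of D_0^k is killed by all J^a_n with n \<ge> 0. After the spectral flow theta_1 the
  zero modes J^+_0 and J^-_0 act as J^+_{-1} and J^-_1, and the normalised powers (J^+_{-1})^m v
  satisfy all relations imposed on the basis vectors |k/2,m>_+ of the prolongation D^{+,k}_{k/2};
  in particular the flowed d-eigenvalue -k/4 of v is -j(j+1)/(k+2) precisely for j = k/2.
  The universal property of the prolongation gives phi : D^{+,k}_{k/2} \<rightarrow> D_0^{k,1}, and phi kills
  J^-_{-1}|k/2,0>, whose image is J^-_0 v = 0. Conversely, in the quotient by the submodule W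
  generated by that vector, the image of |k/2,0> satisfies the vacuum relations after the flow
  theta_{-1}, so the universal property of D_0^k gives a map psi back. Uniqueness in both universal
  properties makes psi \<circ> phi the quotient map and phi \<circ> psi the identity, so phi is onto with
  kernel W. The D^- case follows by the automorphism exchanging J^+ and J^- (and negating J^0),
  which swaps D^+_j and D^-_j and conjugates theta_s into theta_{-s}.
\<close>

section \<open>Modules over the affine algebra\<close>

locale complex_vector_space = vector_space scale
  for scale :: "complex \<Rightarrow> 'u::ab_group_add \<Rightarrow> 'u"

lemma aff_moduleI:
  assumes "module.subspace scale A"
    and "\<And>x v. v \<in> A \<Longrightarrow> \<rho> x v \<in> A"
    and "\<And>x u v. u \<in> A \<Longrightarrow> v \<in> A \<Longrightarrow> \<rho> x (u + v) = \<rho> x u + \<rho> x v"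
    and "\<And>x c v. v \<in> A \<Longrightarrow> \<rho> x (scale c v) = scale c (\<rho> x v)"
    and "\<And>v m n. v \<in> A \<Longrightarrow> \<rho> (Jp m) (\<rho> (Jm n) v) - \<rho> (Jm n) (\<rho> (Jp m) v)
          = \<rho> (J0 (m + n)) v + (if m + n = 0 then scale (of_int m) (\<rho> Kc v) else 0)"
    and "\<And>v m n. v \<in> A \<Longrightarrow>
          \<rho> (J0 m) (\<rho> (Jp n) v) - \<rho> (Jp n) (\<rho> (J0 m) v) = scale 2 (\<rho> (Jp (m + n)) v)"
    and "\<And>v m n. v \<in> A \<Longrightarrow>
          \<rho> (J0 m) (\<rho> (Jm n) v) - \<rho> (Jm n) (\<rho> (J0 m) v) = scale (-2) (\<rho> (Jm (m + n)) v)"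
    and "\<And>v m n. v \<in> A \<Longrightarrow> \<rho> (J0 m) (\<rho> (J0 n) v) - \<rho> (J0 n) (\<rho> (J0 m) v)
          = (if m + n = 0 then scale (2 * of_int m) (\<rho> Kc v) else 0)"
    and "\<And>v m n. v \<in> A \<Longrightarrow> \<rho> (Jp m) (\<rho> (Jp n) v) = \<rho> (Jp n) (\<rho> (Jp m) v)"
    and "\<And>v m n. v \<in> A \<Longrightarrow> \<rho> (Jm m) (\<rho> (Jm n) v) = \<rho> (Jm n) (\<rho> (Jm m) v)"
    and "\<And>v n. v \<in> A \<Longrightarrow>
          \<rho> Dd (\<rho> (Jp n) v) - \<rho> (Jp n) (\<rho> Dd v) = scale (of_int n) (\<rho> (Jp n) v)"
    and "\<And>v n. v \<in> A \<Longrightarrow>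
          \<rho> Dd (\<rho> (Jm n) v) - \<rho> (Jm n) (\<rho> Dd v) = scale (of_int n) (\<rho> (Jm n) v)"
    and "\<And>v n. v \<in> A \<Longrightarrow>
          \<rho> Dd (\<rho> (J0 n) v) - \<rho> (J0 n) (\<rho> Dd v) = scale (of_int n) (\<rho> (J0 n) v)"
    and "\<And>v x. v \<in> A \<Longrightarrow> \<rho> Kc (\<rho> x v) = \<rho> x (\<rho> Kc v)"
  shows "aff_module scale A \<rho>"
  unfolding aff_module_def by (intro conjI ballI allI assms; assumption)

lemma aff_hom_comp:
  assumes "aff_hom scale A \<rho> B \<sigma> \<phi>" "aff_hom scale B \<sigma> C \<tau> \<psi>"
  shows "aff_hom scale A \<rho> C \<tau> (\<lambda>x. \<psi> (\<phi> x))"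
  using assms unfolding aff_hom_def by simp

lemma aff_hom_id: "aff_module scale A \<rho> \<Longrightarrow> aff_hom scale A \<rho> A \<rho> (\<lambda>x. x)"
  unfolding aff_hom_def aff_module_def by blast

locale aff_rep = complex_vector_space scale
  for scale :: "complex \<Rightarrow> 'u::ab_group_add \<Rightarrow> 'u" +
  fixes A :: "'u set" and \<rho> :: "gen \<Rightarrow> 'u \<Rightarrow> 'u"
  assumes aff_module: "aff_module scale A \<rho>"
begin

lemma subspace_carrier: "subspace A"
  using aff_module unfolding aff_module_def by blast

lemma act_in [simp]: "v \<in> A \<Longrightarrow> \<rho> x v \<in> A"
  using aff_module unfolding aff_module_def by blast

lemma zero_in [simp]: "0 \<in> A"
  using subspace_carrier subspace_0 by blast

lemma add_in [simp]: "u \<in> A \<Longrightarrow> v \<in> A \<Longrightarrow> u + v \<in> A"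
  using subspace_carrier subspace_add by blast

lemma scale_in [simp]: "v \<in> A \<Longrightarrow> scale c v \<in> A"
  using subspace_carrier subspace_scale by blast

lemma neg_in [simp]: "v \<in> A \<Longrightarrow> - v \<in> A"
  using subspace_carrier subspace_neg by blast

lemma diff_in [simp]: "u \<in> A \<Longrightarrow> v \<in> A \<Longrightarrow> u - v \<in> A"
  using subspace_carrier subspace_diff by blast

lemma act_add [simp]: "u \<in> A \<Longrightarrow> v \<in> A \<Longrightarrow> \<rho> x (u + v) = \<rho> x u + \<rho> x v"
  using aff_module unfolding aff_module_def by blast

lemma act_scale [simp]: "v \<in> A \<Longrightarrow> \<rho> x (scale c v) = scale c (\<rho> x v)"
  using aff_module unfolding aff_module_def by blast

lemma act_zero [simp]: "\<rho> x 0 = 0"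
  using act_scale[of 0 x 0] by simp

lemma act_neg [simp]: "v \<in> A \<Longrightarrow> \<rho> x (- v) = - \<rho> x v"
  using act_scale[of v x "-1"] by simp

lemma act_diff [simp]: "u \<in> A \<Longrightarrow> v \<in> A \<Longrightarrow> \<rho> x (u - v) = \<rho> x u - \<rho> x v"
  by (simp only: diff_conv_add_uminus act_add neg_in act_neg)

lemma comm_Jp_Jm: "v \<in> A \<Longrightarrow> \<rho> (Jp m) (\<rho> (Jm n) v)
    = \<rho> (J0 (m + n)) v + (if m + n = 0 then scale (of_int m) (\<rho> Kc v) else 0)
      + \<rho> (Jm n) (\<rho> (Jp m) v)"
  using aff_module unfolding aff_module_def diff_eq_eq by blast

lemma comm_J0_Jp: "v \<in> A \<Longrightarrow>
    \<rho> (J0 m) (\<rho> (Jp n) v) = scale 2 (\<rho> (Jp (m + n)) v) + \<rho> (Jp n) (\<rho> (J0 m) v)"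
  using aff_module unfolding aff_module_def diff_eq_eq by blast

lemma comm_J0_Jm: "v \<in> A \<Longrightarrow>
    \<rho> (J0 m) (\<rho> (Jm n) v) = scale (-2) (\<rho> (Jm (m + n)) v) + \<rho> (Jm n) (\<rho> (J0 m) v)"
  using aff_module unfolding aff_module_def diff_eq_eq by blast

lemma comm_J0_J0: "v \<in> A \<Longrightarrow> \<rho> (J0 m) (\<rho> (J0 n) v)
    = (if m + n = 0 then scale (2 * of_int m) (\<rho> Kc v) else 0) + \<rho> (J0 n) (\<rho> (J0 m) v)"
  using aff_module unfolding aff_module_def diff_eq_eq by blast

lemma comm_Jp_Jp: "v \<in> A \<Longrightarrow> \<rho> (Jp m) (\<rho> (Jp n) v) = \<rho> (Jp n) (\<rho> (Jp m) v)"
  using aff_module unfolding aff_module_def by blast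

lemma comm_Jm_Jm: "v \<in> A \<Longrightarrow> \<rho> (Jm m) (\<rho> (Jm n) v) = \<rho> (Jm n) (\<rho> (Jm m) v)"
  using aff_module unfolding aff_module_def by blast

lemma comm_Dd_Jp: "v \<in> A \<Longrightarrow>
    \<rho> Dd (\<rho> (Jp n) v) = scale (of_int n) (\<rho> (Jp n) v) + \<rho> (Jp n) (\<rho> Dd v)"
  using aff_module unfolding aff_module_def diff_eq_eq by blast

lemma comm_Dd_Jm: "v \<in> A \<Longrightarrow>
    \<rho> Dd (\<rho> (Jm n) v) = scale (of_int n) (\<rho> (Jm n) v) + \<rho> (Jm n) (\<rho> Dd v)"
  using aff_module unfolding aff_module_def diff_eq_eq by blast

lemma comm_Dd_J0: "v \<in> A \<Longrightarrow>
    \<rho> Dd (\<rho> (J0 n) v) = scale (of_int n) (\<rho> (J0 n) v) + \<rho> (J0 n) (\<rho> Dd v)"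
  using aff_module unfolding aff_module_def diff_eq_eq by blast

lemma comm_Kc: "v \<in> A \<Longrightarrow> \<rho> Kc (\<rho> x v) = \<rho> x (\<rho> Kc v)"
  using aff_module unfolding aff_module_def by blast

lemma aff_hom_in: "aff_hom scale A \<rho> B \<sigma> \<phi> \<Longrightarrow> v \<in> A \<Longrightarrow> \<phi> v \<in> B"
  unfolding aff_hom_def by blast

lemma aff_hom_add: "aff_hom scale A \<rho> B \<sigma> \<phi> \<Longrightarrow> u \<in> A \<Longrightarrow> v \<in> A \<Longrightarrow> \<phi> (u + v) = \<phi> u + \<phi> v"
  unfolding aff_hom_def by blast

lemma aff_hom_scale: "aff_hom scale A \<rho> B \<sigma> \<phi> \<Longrightarrow> v \<in> A \<Longrightarrow> \<phi> (scale c v) = scale c (\<phi> v)"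
  unfolding aff_hom_def by blast

lemma aff_hom_act: "aff_hom scale A \<rho> B \<sigma> \<phi> \<Longrightarrow> v \<in> A \<Longrightarrow> \<phi> (\<rho> x v) = \<sigma> x (\<phi> v)"
  unfolding aff_hom_def by blast

lemma aff_hom_zero: "aff_hom scale A \<rho> B \<sigma> \<phi> \<Longrightarrow> \<phi> 0 = 0"
  using aff_hom_scale[of B \<sigma> \<phi> 0 0] by simp

lemma aff_hom_neg: "aff_hom scale A \<rho> B \<sigma> \<phi> \<Longrightarrow> v \<in> A \<Longrightarrow> \<phi> (- v) = - \<phi> v"
  using aff_hom_scale[of B \<sigma> \<phi> v "-1"] by simp

lemma aff_hom_diff: "aff_hom scale A \<rho> B \<sigma> \<phi> \<Longrightarrow> u \<in> A \<Longrightarrow> v \<in> A \<Longrightarrow> \<phi> (u - v) = \<phi> u - \<phi> v"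
  using aff_hom_add[of B \<sigma> \<phi> "u - v" v] by (simp add: eq_diff_eq)

end

context complex_vector_space
begin

lemma aff_repI: "aff_module scale A \<rho> \<Longrightarrow> aff_rep scale A \<rho>"
  by (simp add: aff_rep_def aff_rep_axioms_def complex_vector_space_axioms)

end

section \<open>Spectral flow\<close>

lemma spectral_flow_simps [simp]:
  "spectral_flow scale s \<rho> (Jp n) v = \<rho> (Jp (n - s)) v"
  "spectral_flow scale s \<rho> (Jm n) v = \<rho> (Jm (n + s)) v"
  "spectral_flow scale s \<rho> (J0 n) v = \<rho> (J0 n) v - (if n = 0 then scale (of_int s) (\<rho> Kc v) else 0)"
  "spectral_flow scale s \<rho> Kc v = \<rho> Kc v"
  "spectral_flow scale s \<rho> Dd v
     = \<rho> Dd v + scale (of_int s / 2) (\<rho> (J0 0) v) - scale ((of_int s)\<^sup>2 / 4) (\<rho> Kc v)"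
  by (simp_all add: spectral_flow_def)

context complex_vector_space
begin

lemma spectral_flow_inverse: "spectral_flow scale s (spectral_flow scale (- s) \<rho>) = \<rho>"
proof (intro ext)
  fix x v
  show "spectral_flow scale s (spectral_flow scale (- s) \<rho>) x v = \<rho> x v"
  proof (cases x)
    case Dd
    have "scale (of_int s / 2) (scale (of_int s) w) = scale ((of_int s)\<^sup>2 / 4) w + scale ((of_int s)\<^sup>2 / 4) w"
      for w
      by (simp add: scale_left_distrib[symmetric] power2_eq_square)
    then show ?thesis using Dd by (simp add: algebra_simps)
  qed simp_all
qed

end

context aff_rep
begin

lemma spectral_flow_module: "aff_module scale A (spectral_flow scale s \<rho>)"
proof (rule aff_moduleI, goal_cases)
  case 1 show ?case by (rule subspace_carrier)
next
  case (2 x v) then show ?case by (cases x) simp_all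
next
  case (3 x u v) then show ?case by (cases x) (simp_all add: algebra_simps)
next
  case (4 x c v) then show ?case by (cases x) (simp_all add: algebra_simps scale_left_commute)
next
  case (5 v m n) then show ?case
    using comm_Jp_Jm[OF 5, of "m - s" "n + s"] by (cases "m + n = 0") (simp_all add: algebra_simps)
next
  case (6 v m n) then show ?case
    using comm_J0_Jp[OF 6, of m "n - s"] comm_Kc[OF 6, of "Jp (n - s)"]
    by (cases "m = 0") (simp_all add: algebra_simps)
next
  case (7 v m n) then show ?case
    using comm_J0_Jm[OF 7, of m "n + s"] comm_Kc[OF 7, of "Jm (n + s)"]
    by (cases "m = 0") (simp_all add: algebra_simps)
next
  case (8 v m n) then show ?case
    using comm_J0_J0[OF 8, of m n] comm_Kc[OF 8, of "J0 n"] comm_Kc[OF 8, of "J0 m"]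
    by (cases "m = 0"; cases "n = 0") (simp_all add: algebra_simps)
next
  case (9 v m n) then show ?case by (simp add: comm_Jp_Jp)
next
  case (10 v m n) then show ?case by (simp add: comm_Jm_Jm)
next
  case (11 v n) then show ?case
    using comm_Dd_Jp[OF 11, of "n - s"] comm_J0_Jp[OF 11, of 0 "n - s"] comm_Kc[OF 11, of "Jp (n - s)"]
    by (simp add: algebra_simps)
next
  case (12 v n) then show ?case
    by (simp add: algebra_simps comm_Dd_Jm[OF 12] comm_J0_Jm[OF 12] comm_Kc[OF 12, of "Jm (n + s)"])
next
  case (13 v n) then show ?case
    using comm_Dd_J0[OF 13, of n] comm_J0_J0[OF 13, of 0 n] comm_Kc[OF 13, of "J0 n"]
      comm_Kc[OF 13, of Dd] comm_Kc[OF 13, of "J0 0"]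
    by (cases "n = 0") (simp_all add: algebra_simps)
next
  case (14 v x) then show ?case
  proof (cases x)
    case (Jp n) then show ?thesis using comm_Kc[OF 14, of "Jp (n - s)"] by simp
  next
    case (Jm n) then show ?thesis using comm_Kc[OF 14, of "Jm (n + s)"] by simp
  next
    case (J0 n) then show ?thesis using comm_Kc[OF 14, of "J0 n"] 14 by simp
  next
    case Kc then show ?thesis by simp
  next
    case Dd then show ?thesis
      using comm_Kc[OF 14, of "J0 0"] comm_Kc[OF 14, of Dd] 14 by (simp add: algebra_simps)
  qed
qed

lemma aff_hom_spectral_flow:
  assumes "aff_hom scale A \<rho> B \<sigma> \<phi>"
  shows "aff_hom scale A (spectral_flow scale s \<rho>) B (spectral_flow scale s \<sigma>) \<phi>"
proof -
  have "\<phi> (spectral_flow scale s \<rho> x u) = spectral_flow scale s \<sigma> x (\<phi> u)" if "u \<in> A" for x u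
    using that by (cases x)
      (simp_all add: aff_hom_act[OF assms] aff_hom_diff[OF assms] aff_hom_add[OF assms]
        aff_hom_scale[OF assms] aff_hom_zero[OF assms])
  then show ?thesis using assms unfolding aff_hom_def by blast
qed

end

section \<open>Exchanging J^+ and J^-\<close>

definition pm_swap :: "(gen \<Rightarrow> 'u \<Rightarrow> 'u::ab_group_add) \<Rightarrow> gen \<Rightarrow> 'u \<Rightarrow> 'u" where
  "pm_swap \<rho> x v = (case x of
      Jp n \<Rightarrow> \<rho> (Jm n) v | Jm n \<Rightarrow> \<rho> (Jp n) v | J0 n \<Rightarrow> - \<rho> (J0 n) v | Kc \<Rightarrow> \<rho> Kc v | Dd \<Rightarrow> \<rho> Dd v)"

lemma pm_swap_simps [simp]:
  "pm_swap \<rho> (Jp n) v = \<rho> (Jm n) v" "pm_swap \<rho> (Jm n) v = \<rho> (Jp n) v"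
  "pm_swap \<rho> (J0 n) v = - \<rho> (J0 n) v" "pm_swap \<rho> Kc v = \<rho> Kc v" "pm_swap \<rho> Dd v = \<rho> Dd v"
  by (simp_all add: pm_swap_def)

lemma pm_swap_pm_swap [simp]: "pm_swap (pm_swap \<rho>) = \<rho>"
proof (intro ext)
  fix x v show "pm_swap (pm_swap \<rho>) x v = \<rho> x v" by (cases x) simp_all
qed

lemma rel_D0_pm_swap: "rel_D0 scale k (pm_swap \<sigma>) v = rel_D0 scale k \<sigma> v"
  unfolding rel_D0_def pm_swap_simps neg_equal_0_iff_equal by blast

context complex_vector_space
begin

lemma spectral_flow_pm_swap:
  "spectral_flow scale s (pm_swap \<rho>) = pm_swap (spectral_flow scale (- s) \<rho>)"
proof (intro ext)
  fix x v show "spectral_flow scale s (pm_swap \<rho>) x v = pm_swap (spectral_flow scale (- s) \<rho>) x v"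
    by (cases x) (simp_all add: algebra_simps)
qed

lemma rel_Dplus_pm_swap: "rel_Dplus scale j k (pm_swap \<rho>) e = rel_Dminus scale j k \<rho> e"
proof -
  have J0: "- a = scale (of_real (2 * (real m - j))) x \<longleftrightarrow> a = scale (of_real (2 * (j - real m))) x"
    for a x m
  proof -
    have e: "complex_of_real (2 * (j - real m)) = - of_real (2 * (real m - j))" by simp
    show ?thesis unfolding e scale_minus_left by (metis minus_minus)
  qed
  show ?thesis
    unfolding rel_Dplus_def rel_Dminus_def pm_swap_simps J0 neg_equal_0_iff_equal by blast
qed

lemma gen_submodule_pm_swap: "gen_submodule scale A (pm_swap \<rho>) w = gen_submodule scale A \<rho> w"
proof -
  have "(\<forall>x. \<forall>v\<in>S. pm_swap \<rho> x v \<in> S) \<longleftrightarrow> (\<forall>x. \<forall>v\<in>S. \<rho> x v \<in> S)" if S: "subspace S" for S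
  proof
    assume closed: "\<forall>x. \<forall>v\<in>S. pm_swap \<rho> x v \<in> S"
    show "\<forall>x. \<forall>v\<in>S. \<rho> x v \<in> S"
    proof (intro allI ballI)
      fix x v assume v: "v \<in> S"
      show "\<rho> x v \<in> S"
      proof (cases x)
        case (Jp n) then show ?thesis using closed[rule_format, OF v, of "Jm n"] by simp
      next
        case (Jm n) then show ?thesis using closed[rule_format, OF v, of "Jp n"] by simp
      next
        case (J0 n)
        have "- pm_swap \<rho> (J0 n) v \<in> S" using closed v subspace_neg[OF S] by blast
        then show ?thesis using J0 by simp
      next
        case Kc then show ?thesis using closed[rule_format, OF v, of Kc] by simp
      next
        case Dd then show ?thesis using closed[rule_format, OF v, of Dd] by simp
      qed
    qed
  next
    assume closed: "\<forall>x. \<forall>v\<in>S. \<rho> x v \<in> S"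
    show "\<forall>x. \<forall>v\<in>S. pm_swap \<rho> x v \<in> S"
    proof (intro allI ballI)
      fix x v assume "v \<in> S"
      then show "pm_swap \<rho> x v \<in> S" using closed subspace_neg[OF S] by (cases x) auto
    qed
  qed
  then show ?thesis
    unfolding gen_submodule_def by (intro arg_cong[where f = Inter] Collect_cong) blast
qed

end

context aff_rep
begin

lemma pm_swap_module: "aff_module scale A (pm_swap \<rho>)"
proof (rule aff_moduleI, goal_cases)
  case 1 show ?case by (rule subspace_carrier)
next
  case (2 x v) then show ?case by (cases x) simp_all
next
  case (3 x u v) then show ?case by (cases x) (simp_all add: algebra_simps)
next
  case (4 x c v) then show ?case by (cases x) simp_all
next
  case (5 v m n) then show ?case
  proof (cases "m + n = 0")
    case True
    then have "n = - m" by simp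
    then show ?thesis using comm_Jp_Jm[OF 5, of n m] by (simp add: algebra_simps)
  qed (use comm_Jp_Jm[OF 5, of n m] in \<open>simp add: algebra_simps\<close>)
next
  case (6 v m n) then show ?case using comm_J0_Jm[OF 6, of m n] by (simp add: algebra_simps)
next
  case (7 v m n) then show ?case using comm_J0_Jp[OF 7, of m n] by (simp add: algebra_simps)
next
  case (8 v m n) then show ?case
    using comm_J0_J0[OF 8, of m n] by (cases "m + n = 0") (simp_all add: algebra_simps)
next
  case (9 v m n) then show ?case using comm_Jm_Jm[OF 9] by simp
next
  case (10 v m n) then show ?case using comm_Jp_Jp[OF 10] by simp
next
  case (11 v n) then show ?case using comm_Dd_Jm[OF 11, of n] by (simp add: algebra_simps)
next
  case (12 v n) then show ?case using comm_Dd_Jp[OF 12, of n] by (simp add: algebra_simps)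
next
  case (13 v n) then show ?case using comm_Dd_J0[OF 13, of n] 13 by (simp add: algebra_simps)
next
  case (14 v x)
  then show ?case
    using comm_Kc[OF 14, of "Jm n" for n] comm_Kc[OF 14, of "Jp n" for n] comm_Kc[OF 14, of "J0 n" for n]
      comm_Kc[OF 14, of Dd]
    by (cases x) simp_all
qed

lemma aff_hom_pm_swap:
  assumes "aff_hom scale A \<rho> B \<sigma> \<phi>"
  shows "aff_hom scale A (pm_swap \<rho>) B (pm_swap \<sigma>) \<phi>"
proof -
  have "\<phi> (pm_swap \<rho> x u) = pm_swap \<sigma> x (\<phi> u)" if "u \<in> A" for x u
    using that by (cases x) (simp_all add: aff_hom_act[OF assms] aff_hom_neg[OF assms])
  then show ?thesis using assms unfolding aff_hom_def by blast
qed

end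

section \<open>Submodules and quotients\<close>

definition aff_submodule :: "(complex \<Rightarrow> 'u::ab_group_add \<Rightarrow> 'u) \<Rightarrow> 'u set \<Rightarrow> (gen \<Rightarrow> 'u \<Rightarrow> 'u) \<Rightarrow> 'u set \<Rightarrow> bool"
  where "aff_submodule scale A \<rho> S \<longleftrightarrow>
    S \<subseteq> A \<and> module.subspace scale S \<and> (\<forall>x. \<forall>v\<in>S. \<rho> x v \<in> S)"

lemma gen_submodule_eq: "gen_submodule scale A \<rho> w = \<Inter>{S. aff_submodule scale A \<rho> S \<and> w \<in> S}"
  unfolding gen_submodule_def aff_submodule_def by (simp only: conj_assoc)

lemma gen_submodule_least:
  "aff_submodule scale A \<rho> S \<Longrightarrow> w \<in> S \<Longrightarrow> gen_submodule scale A \<rho> w \<subseteq> S"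
  unfolding gen_submodule_eq by blast

context aff_rep
begin

lemma aff_submodule_gen_submodule:
  assumes "w \<in> A"
  shows "aff_submodule scale A \<rho> (gen_submodule scale A \<rho> w)"
proof -
  let ?F = "{S. aff_submodule scale A \<rho> S \<and> w \<in> S}"
  have "A \<in> ?F" using assms subspace_carrier unfolding aff_submodule_def by simp
  moreover have "subspace (\<Inter>?F)" by (rule subspace_Inter) (simp add: aff_submodule_def)
  moreover have "\<rho> x v \<in> \<Inter>?F" if "v \<in> \<Inter>?F" for x v
    using that unfolding aff_submodule_def by blast
  ultimately show ?thesis unfolding gen_submodule_eq aff_submodule_def by blast
qed

lemma generator_in_gen_submodule: "w \<in> gen_submodule scale A \<rho> w"
  unfolding gen_submodule_def by blast

lemma aff_submodule_kernel:
  assumes "aff_hom scale A \<rho> B \<sigma> \<phi>" and "aff_module scale B \<sigma>"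
  shows "aff_submodule scale A \<rho> {x\<in>A. \<phi> x = 0}"
  unfolding aff_submodule_def
proof (intro conjI allI ballI)
  show "{x\<in>A. \<phi> x = 0} \<subseteq> A" by blast
  show "subspace {x\<in>A. \<phi> x = 0}"
  proof (rule subspaceI)
    show "0 \<in> {x\<in>A. \<phi> x = 0}" using aff_hom_zero[OF assms(1)] by simp
    show "u + v \<in> {x\<in>A. \<phi> x = 0}" if "u \<in> {x\<in>A. \<phi> x = 0}" "v \<in> {x\<in>A. \<phi> x = 0}" for u v
      using that aff_hom_add[OF assms(1)] by simp
    show "scale c v \<in> {x\<in>A. \<phi> x = 0}" if "v \<in> {x\<in>A. \<phi> x = 0}" for c v
      using that aff_hom_scale[OF assms(1)] by simp
  qed
  show "\<rho> x v \<in> {x\<in>A. \<phi> x = 0}" if "v \<in> {x\<in>A. \<phi> x = 0}" for x v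
    using that aff_rep.act_zero[OF aff_repI[OF assms(2)]] aff_hom_act[OF assms(1)] by simp
qed

lemma kernel_eq_gen_submodule:
  assumes \<phi>: "aff_hom scale A \<rho> B \<sigma> \<phi>" and B: "aff_module scale B \<sigma>"
    and w: "w \<in> A" "\<phi> w = 0"
    and factor: "\<And>u. u \<in> A \<Longrightarrow> \<psi> (\<phi> u) = p u" and "\<psi> 0 = 0"
    and p_zero: "\<And>u. u \<in> A \<Longrightarrow> p u = 0 \<longleftrightarrow> u \<in> gen_submodule scale A \<rho> w"
  shows "{x\<in>A. \<phi> x = 0} = gen_submodule scale A \<rho> w"
proof
  show "gen_submodule scale A \<rho> w \<subseteq> {x\<in>A. \<phi> x = 0}"
    using gen_submodule_least[OF aff_submodule_kernel[OF \<phi> B]] w by blast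
  show "{x\<in>A. \<phi> x = 0} \<subseteq> gen_submodule scale A \<rho> w"
    using factor p_zero \<open>\<psi> 0 = 0\<close> by force
qed

lemma aff_hom_quotient_factor:
  assumes \<phi>: "aff_hom scale A \<rho> B \<sigma> \<phi>" and p: "aff_hom scale A \<rho> T \<tau> p" and "T \<subseteq> A"
    and kernel: "\<And>u. u \<in> A \<Longrightarrow> \<phi> (u - p u) = 0"
  shows "aff_hom scale T (\<lambda>x t. p (\<rho> x t)) B \<sigma> \<phi>"
proof -
  have "\<phi> (p u) = \<phi> u" if "u \<in> A" for u
  proof -
    have "p u \<in> A" using aff_hom_in[OF p that] \<open>T \<subseteq> A\<close> by blast
    then show ?thesis using kernel[OF that] aff_hom_diff[OF \<phi> that] by simp
  qed
  then show ?thesis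
    using \<phi> \<open>T \<subseteq> A\<close> unfolding aff_hom_def by (auto simp: subset_iff)
qed

end

context complex_vector_space
begin

lemma span_disjoint_subsets_eq_0:
  assumes B: "independent B" and "B1 \<subseteq> B" "B2 \<subseteq> B" "B1 \<inter> B2 = {}"
    and x: "x \<in> span B1" "x \<in> span B2"
  shows "x = 0"
proof -
  have "representation B x b = 0" for b
    using representation_extend[OF B x(1) assms(2)] representation_extend[OF B x(2) assms(3)]
      representation_ne_zero[of B1 x b] representation_ne_zero[of B2 x b] assms(4)
    by (metis disjoint_iff)
  moreover have "x \<in> span B" using x(1) assms(2) span_mono by blast
  ultimately show ?thesis using sum_nonzero_representation_eq[OF B] by fastforce
qed

lemma exists_complement_subspace:
  assumes S: "subspace S" and A: "subspace A" and "S \<subseteq> A"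
  obtains T where "subspace T" "T \<subseteq> A" "\<And>x. x \<in> S \<Longrightarrow> x \<in> T \<Longrightarrow> x = 0"
    "\<And>u. u \<in> A \<Longrightarrow> \<exists>s\<in>S. \<exists>t\<in>T. u = s + t"
proof -
  obtain BS where BS: "BS \<subseteq> S" "independent BS" "S \<subseteq> span BS"
    by (rule maximal_independent_subset)
  obtain BA where BA: "BS \<subseteq> BA" "BA \<subseteq> A" "independent BA" "A \<subseteq> span BA"
    by (rule maximal_independent_subset_extend[OF order_trans[OF BS(1) assms(3)] BS(2)])
  have span_BS: "span BS = S" using BS S span_minimal by blast
  show thesis
  proof
    show "subspace (span (BA - BS))" by simp
    show "span (BA - BS) \<subseteq> A" using BA A span_minimal[of "BA - BS" A] by blast
    show "x = 0" if "x \<in> S" "x \<in> span (BA - BS)" for x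
      using span_disjoint_subsets_eq_0[OF BA(3) BA(1), of "BA - BS" x] that span_BS by blast
    show "\<exists>s\<in>S. \<exists>t\<in>span (BA - BS). u = s + t" if "u \<in> A" for u
    proof -
      have "u \<in> span (BS \<union> (BA - BS))" using that BA by (metis Un_Diff_cancel sup.absorb2 subsetD)
      then show ?thesis unfolding span_Un span_BS by blast
    qed
  qed
qed

lemma exists_linear_projection:
  assumes S: "subspace S" and A: "subspace A" and SA: "S \<subseteq> A"
  obtains T p where "subspace T" "T \<subseteq> A" "\<And>u. u \<in> A \<Longrightarrow> p u \<in> T" "\<And>u. u \<in> A \<Longrightarrow> u - p u \<in> S"
    "\<And>u v. u \<in> A \<Longrightarrow> v \<in> A \<Longrightarrow> p (u + v) = p u + p v"
    "\<And>c u. u \<in> A \<Longrightarrow> p (scale c u) = scale c (p u)"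
    "\<And>u. u \<in> A \<Longrightarrow> p u = 0 \<longleftrightarrow> u \<in> S"
proof -
  obtain T where T: "subspace T" "T \<subseteq> A" "\<And>x. x \<in> S \<Longrightarrow> x \<in> T \<Longrightarrow> x = 0"
    "\<And>u. u \<in> A \<Longrightarrow> \<exists>s\<in>S. \<exists>t\<in>T. u = s + t"
    using exists_complement_subspace[OF S A SA] by blast
  define p where "p u = (THE t. t \<in> T \<and> u - t \<in> S)" for u
  have p_eqI: "p u = t" if "t \<in> T" "u - t \<in> S" for u t
    unfolding p_def
  proof (rule the_equality)
    fix t' assume t': "t' \<in> T \<and> u - t' \<in> S"
    have "t' - t = (u - t) - (u - t')" by simp
    then have "t' - t \<in> S" using that t' S subspace_diff by metis
    moreover have "t' - t \<in> T" using that t' T(1) subspace_diff by blast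
    ultimately show "t' = t" using T(3) by fastforce
  qed (use that in blast)
  have p_in: "p u \<in> T" and p_diff: "u - p u \<in> S" if u: "u \<in> A" for u
  proof -
    obtain s t where "s \<in> S" "t \<in> T" "u = s + t" using T(4)[OF u] by blast
    then have "p u = t" by (intro p_eqI) simp_all
    with \<open>s \<in> S\<close> \<open>t \<in> T\<close> \<open>u = s + t\<close> show "p u \<in> T" "u - p u \<in> S" by simp_all
  qed
  show thesis
  proof (rule that[OF T(1,2) p_in p_diff])
    fix u v assume uv: "u \<in> A" "v \<in> A"
    have "u + v - (p u + p v) = (u - p u) + (v - p v)" by (simp add: algebra_simps)
    then have "u + v - (p u + p v) \<in> S" using p_diff uv subspace_add[OF S] by metis
    moreover have "p u + p v \<in> T" using p_in uv subspace_add[OF T(1)] by blast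
    ultimately show "p (u + v) = p u + p v" by (rule p_eqI[rotated])
  next
    fix c u assume "u \<in> A"
    then show "p (scale c u) = scale c (p u)"
      using p_in p_diff subspace_scale[OF T(1)] subspace_scale[OF S]
      by (intro p_eqI) (auto simp: scale_right_diff_distrib[symmetric])
  next
    fix u assume u: "u \<in> A"
    show "p u = 0 \<longleftrightarrow> u \<in> S"
    proof
      assume "p u = 0" then show "u \<in> S" using p_diff[OF u] by simp
    next
      assume "u \<in> S" then show "p u = 0" by (intro p_eqI) (simp_all add: subspace_0[OF T(1)])
    qed
  qed
qed

end

context aff_rep
begin

lemma aff_module_projection:
  assumes T: "subspace T" "T \<subseteq> A" and p_in: "\<And>u. u \<in> A \<Longrightarrow> p u \<in> T"
    and p_add: "\<And>u v. u \<in> A \<Longrightarrow> v \<in> A \<Longrightarrow> p (u + v) = p u + p v"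
    and p_scale: "\<And>c u. u \<in> A \<Longrightarrow> p (scale c u) = scale c (p u)"
    and p_act_p: "\<And>x u. u \<in> A \<Longrightarrow> p (\<rho> x (p u)) = p (\<rho> x u)"
  shows "aff_module scale T (\<lambda>x t. p (\<rho> x t))"
proof -
  have p_zero: "p 0 = 0" using p_scale[of 0 0] by simp
  have p_neg: "p (- u) = - p u" if "u \<in> A" for u using p_scale[OF that, of "-1"] by simp
  have p_diff_distrib: "p (u - v) = p u - p v" if "u \<in> A" "v \<in> A" for u v
    using p_add[of "u - v" v] that by (simp add: eq_diff_eq)
  have T_A: "t \<in> A" if "t \<in> T" for t using that T(2) by blast
  note p_simps = p_act_p p_add p_diff_distrib p_scale p_zero p_neg
  show ?thesis
  proof (rule aff_moduleI, goal_cases)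
    case 1 show ?case by (fact T(1))
  next
    case (2 x v) then show ?case using T_A p_in by simp
  next
    case (3 x u v) then show ?case using T_A p_add by simp
  next
    case (4 x c v) then show ?case using T_A p_scale by simp
  next
    case (5 v m n) then have "v \<in> A" by (rule T_A)
    then show ?case by (cases "m + n = 0") (simp_all add: p_simps comm_Jp_Jm)
  next
    case (6 v m n) then have "v \<in> A" by (rule T_A)
    then show ?case by (simp add: p_simps comm_J0_Jp)
  next
    case (7 v m n) then have "v \<in> A" by (rule T_A)
    then show ?case by (simp add: p_simps comm_J0_Jm)
  next
    case (8 v m n) then have "v \<in> A" by (rule T_A)
    then show ?case by (cases "m + n = 0") (simp_all add: p_simps comm_J0_J0[of v m n])
  next
    case (9 v m n) then have "v \<in> A" by (rule T_A)
    then show ?case by (simp add: p_simps comm_Jp_Jp[of v m n])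
  next
    case (10 v m n) then have "v \<in> A" by (rule T_A)
    then show ?case by (simp add: p_simps comm_Jm_Jm[of v m n])
  next
    case (11 v n) then have "v \<in> A" by (rule T_A)
    then show ?case by (simp add: p_simps comm_Dd_Jp)
  next
    case (12 v n) then have "v \<in> A" by (rule T_A)
    then show ?case by (simp add: p_simps comm_Dd_Jm)
  next
    case (13 v n) then have "v \<in> A" by (rule T_A)
    then show ?case by (simp add: p_simps comm_Dd_J0)
  next
    case (14 v x) then have "v \<in> A" by (rule T_A)
    then show ?case by (simp add: p_simps comm_Kc)
  qed
qed

text \<open>All modules live in one ambient space, so the quotient A/S is realised on a complement T of
  S in A, acted on through the projection p along S.\<close>

lemma exists_quotient_module:
  assumes "aff_submodule scale A \<rho> S"
  obtains T p where "T \<subseteq> A" "aff_module scale T (\<lambda>x t. p (\<rho> x t))"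
    "aff_hom scale A \<rho> T (\<lambda>x t. p (\<rho> x t)) p"
    "\<And>u. u \<in> A \<Longrightarrow> p u = 0 \<longleftrightarrow> u \<in> S" "\<And>u. u \<in> A \<Longrightarrow> u - p u \<in> S"
proof -
  have S: "subspace S" "S \<subseteq> A" "\<And>x u. u \<in> S \<Longrightarrow> \<rho> x u \<in> S"
    using assms unfolding aff_submodule_def by blast+
  obtain T p where T: "subspace T" "T \<subseteq> A" and p_in: "\<And>u. u \<in> A \<Longrightarrow> p u \<in> T"
    and p_diff: "\<And>u. u \<in> A \<Longrightarrow> u - p u \<in> S"
    and p_add: "\<And>u v. u \<in> A \<Longrightarrow> v \<in> A \<Longrightarrow> p (u + v) = p u + p v"
    and p_scale: "\<And>c u. u \<in> A \<Longrightarrow> p (scale c u) = scale c (p u)"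
    and p_zero_iff: "\<And>u. u \<in> A \<Longrightarrow> p u = 0 \<longleftrightarrow> u \<in> S"
    using exists_linear_projection[OF S(1) subspace_carrier S(2)] by blast
  have p_act_p: "p (\<rho> x (p u)) = p (\<rho> x u)" if "u \<in> A" for u x
  proof -
    have pu: "p u \<in> A" using p_in[OF that] T(2) by blast
    have "\<rho> x (u - p u) \<in> S" using S(3) p_diff[OF that] by blast
    then have zero: "p (\<rho> x (u - p u)) = 0" using p_zero_iff S(2) by blast
    have "p (\<rho> x u) = p (\<rho> x (u - p u) + \<rho> x (p u))" using that pu by simp
    also have "\<dots> = p (\<rho> x (p u))" using p_add[of "\<rho> x (u - p u)" "\<rho> x (p u)"] that pu zero by simp
    finally show ?thesis by simp
  qed
  have "aff_module scale T (\<lambda>x t. p (\<rho> x t))"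
    by (rule aff_module_projection[OF T p_in p_add p_scale p_act_p])
  moreover have "aff_hom scale A \<rho> T (\<lambda>x t. p (\<rho> x t)) p"
    unfolding aff_hom_def using p_in p_add p_scale p_act_p by auto
  ultimately show thesis using that T(2) p_zero_iff p_diff by blast
qed

end

section \<open>Prolongations\<close>

lemma is_prolongation_universal:
  assumes "is_prolongation scale A \<rho> e R" "aff_module scale C \<tau>" "\<And>i. g i \<in> C" "R \<tau> g"
  shows "(\<exists>\<phi>. aff_hom scale A \<rho> C \<tau> \<phi> \<and> (\<forall>i. \<phi> (e i) = g i)) \<and>
    (\<forall>\<phi> \<psi>. aff_hom scale A \<rho> C \<tau> \<phi> \<and> (\<forall>i. \<phi> (e i) = g i) \<and>
            aff_hom scale A \<rho> C \<tau> \<psi> \<and> (\<forall>i. \<psi> (e i) = g i) \<longrightarrow> (\<forall>v\<in>A. \<phi> v = \<psi> v))"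
proof -
  have "aff_module scale C \<tau> \<and> (\<forall>i. g i \<in> C) \<and> R \<tau> g" using assms(2-4) by blast
  with assms(1)[unfolded is_prolongation_def, THEN conjunct2, THEN conjunct2, THEN conjunct2,
      THEN spec, THEN spec, THEN spec, of C \<tau> g]
  show ?thesis by (rule mp)
qed

lemma is_prolongation_hom_exists:
  assumes "is_prolongation scale A \<rho> e R" "aff_module scale C \<tau>" "\<And>i. g i \<in> C" "R \<tau> g"
  obtains \<phi> where "aff_hom scale A \<rho> C \<tau> \<phi>" "\<And>i. \<phi> (e i) = g i"
proof -
  from is_prolongation_universal[of scale A \<rho> e R C \<tau> g, OF assms] obtain \<phi>
    where "aff_hom scale A \<rho> C \<tau> \<phi>" "\<forall>i. \<phi> (e i) = g i"
    by (elim conjE exE)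
  then show thesis using that by blast
qed

lemma is_prolongation_hom_unique:
  assumes "is_prolongation scale A \<rho> e R" "aff_module scale C \<tau>" "\<And>i. g i \<in> C" "R \<tau> g"
    and "aff_hom scale A \<rho> C \<tau> \<phi>" "\<And>i. \<phi> (e i) = g i"
    and "aff_hom scale A \<rho> C \<tau> \<psi>" "\<And>i. \<psi> (e i) = g i"
    and "v \<in> A"
  shows "\<phi> v = \<psi> v"
proof -
  have "aff_hom scale A \<rho> C \<tau> \<phi> \<and> (\<forall>i. \<phi> (e i) = g i) \<and>
      aff_hom scale A \<rho> C \<tau> \<psi> \<and> (\<forall>i. \<psi> (e i) = g i)"
    using assms(5-8) by blast
  then show ?thesis
    using is_prolongation_universal[of scale A \<rho> e R C \<tau> g, OF assms(1-4), THEN conjunct2, rule_format] assms(9) by blast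
qed

lemma is_prolongation_endo_eq_id:
  assumes P: "is_prolongation scale A \<rho> e R" and \<chi>: "aff_hom scale A \<rho> A \<rho> \<chi>"
    and fixes_basis: "\<And>i. \<chi> (e i) = e i" and "u \<in> A"
  shows "\<chi> u = u"
proof -
  have A: "aff_module scale A \<rho>" and e: "\<And>i. e i \<in> A" and R: "R \<rho> e"
    using P unfolding is_prolongation_def by blast+
  show ?thesis
    using is_prolongation_hom_unique[of scale A \<rho> e R A \<rho> e, OF P A e R \<chi> fixes_basis
        aff_hom_id[OF A] _ \<open>u \<in> A\<close>]
    by simp
qed

context complex_vector_space
begin

lemma is_prolongation_flowed_endo_eq_id:
  assumes P: "is_prolongation scale A \<rho> e R"
    and \<chi>: "aff_hom scale A (spectral_flow scale s \<rho>) A (spectral_flow scale s \<rho>) \<chi>"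
    and "\<And>i. \<chi> (e i) = e i" and "u \<in> A"
  shows "\<chi> u = u"
proof -
  have "aff_module scale A \<rho>" using P unfolding is_prolongation_def by blast
  then have "aff_module scale A (spectral_flow scale s \<rho>)"
    by (rule aff_rep.spectral_flow_module[OF aff_repI])
  from aff_rep.aff_hom_spectral_flow[OF aff_repI[OF this] \<chi>, of "- s"]
  have "aff_hom scale A \<rho> A \<rho> \<chi>" using spectral_flow_inverse[of "- s" \<rho>] by simp
  then show ?thesis using is_prolongation_endo_eq_id[OF P _ assms(3,4)] by blast
qed

lemma is_prolongation_pm_swap:
  assumes P: "is_prolongation scale A \<rho> e R" and R': "\<And>\<tau> g. R' \<tau> g \<longleftrightarrow> R (pm_swap \<tau>) g"
  shows "is_prolongation scale A (pm_swap \<rho>) e R'"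
proof -
  have A: "aff_module scale A \<rho>" and e: "\<forall>i. e i \<in> A" and Re: "R \<rho> e"
    using P unfolding is_prolongation_def by blast+
  interpret A: aff_rep scale A \<rho> using A by (rule aff_repI)
  have hom_iff: "aff_hom scale A (pm_swap \<rho>) C \<tau> \<phi> \<longleftrightarrow> aff_hom scale A \<rho> C (pm_swap \<tau>) \<phi>"
    for C \<tau> \<phi>
    using A.aff_hom_pm_swap[of C "pm_swap \<tau>" \<phi>]
      aff_rep.aff_hom_pm_swap[OF aff_repI[OF A.pm_swap_module], of C \<tau> \<phi>]
    unfolding pm_swap_pm_swap by blast
  have universal:
    "\<forall>C \<tau> g. aff_module scale C \<tau> \<and> (\<forall>i. g i \<in> C) \<and> R' \<tau> g \<longrightarrow>
      (\<exists>\<phi>. aff_hom scale A (pm_swap \<rho>) C \<tau> \<phi> \<and> (\<forall>i. \<phi> (e i) = g i)) \<and>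
      (\<forall>\<phi> \<psi>. aff_hom scale A (pm_swap \<rho>) C \<tau> \<phi> \<and> (\<forall>i. \<phi> (e i) = g i) \<and>
        aff_hom scale A (pm_swap \<rho>) C \<tau> \<psi> \<and> (\<forall>i. \<psi> (e i) = g i) \<longrightarrow> (\<forall>v\<in>A. \<phi> v = \<psi> v))"
  proof (intro allI impI, elim conjE)
    fix C \<tau> g assume C: "aff_module scale C \<tau>" and g: "\<forall>i. g i \<in> C" and Rg: "R' \<tau> g"
    have "aff_module scale C (pm_swap \<tau>)" by (rule aff_rep.pm_swap_module[OF aff_repI[OF C]])
    moreover have "R (pm_swap \<tau>) g" using Rg by (simp add: R')
    ultimately show "(\<exists>\<phi>. aff_hom scale A (pm_swap \<rho>) C \<tau> \<phi> \<and> (\<forall>i. \<phi> (e i) = g i)) \<and>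
      (\<forall>\<phi> \<psi>. aff_hom scale A (pm_swap \<rho>) C \<tau> \<phi> \<and> (\<forall>i. \<phi> (e i) = g i) \<and>
        aff_hom scale A (pm_swap \<rho>) C \<tau> \<psi> \<and> (\<forall>i. \<psi> (e i) = g i) \<longrightarrow> (\<forall>v\<in>A. \<phi> v = \<psi> v))"
      unfolding hom_iff using is_prolongation_universal[of scale A \<rho> e R C "pm_swap \<tau>" g, OF P] g
      by blast
  qed
  moreover have "R' (pm_swap \<rho>) e" using Re by (simp add: R')
  ultimately show ?thesis
    unfolding is_prolongation_def using A.pm_swap_module e by (intro conjI)
qed

end

section \<open>The spectrally flowed vacuum module\<close>

text \<open>Since J^+|j,m> = sqrt((m+1)(m-2j)) |j,m+1> and 2j = k, the image of |k/2,m>_+ is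
  (J^+_{-1})^m v divided by the product of sqrt((i+1)(i-k)) over i < m.\<close>

primrec dplus_norm :: "int \<Rightarrow> nat \<Rightarrow> real" where
  "dplus_norm k 0 = 1"
| "dplus_norm k (Suc m) = dplus_norm k m / sqrt ((real m + 1) * (real m - real_of_int k))"

lemma conformal_weight_half_level:
  "k \<noteq> -2 \<Longrightarrow> real_of_int k / 2 * (real_of_int k / 2 + 1) / (real_of_int k + 2) = real_of_int k / 4"
  by (simp add: field_simps)

lemma dplus_factor_pos: "k < 0 \<Longrightarrow> (real m + 1) * (real m - real_of_int k) > 0"
  by (intro mult_pos_pos) auto

locale vacuum_rep = aff_rep scale B \<sigma>
  for scale :: "complex \<Rightarrow> 'u::ab_group_add \<Rightarrow> 'u" and B \<sigma> +
  fixes k :: int and v :: "unit \<Rightarrow> 'u"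
  assumes rel_D0: "rel_D0 scale k \<sigma> v" and vacuum_in: "v () \<in> B"
    and negative_level: "k < 0" and noncritical_level: "k \<noteq> -2"
begin

definition vacuum_power :: "nat \<Rightarrow> 'u" where
  "vacuum_power m = (\<sigma> (Jp (-1)) ^^ m) (v ())"

lemma vacuum_power_0: "vacuum_power 0 = v ()"
  by (simp add: vacuum_power_def)

lemma vacuum_power_Suc: "vacuum_power (Suc m) = \<sigma> (Jp (-1)) (vacuum_power m)"
  by (simp add: vacuum_power_def)

lemma vacuum_power_in [simp]: "vacuum_power m \<in> B"
  by (induction m) (simp_all add: vacuum_power_0 vacuum_power_Suc vacuum_in)

lemma vacuum_annihilated:
  "n \<ge> 0 \<Longrightarrow> \<sigma> (Jp n) (v ()) = 0" "n \<ge> 0 \<Longrightarrow> \<sigma> (Jm n) (v ()) = 0"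
  "n \<ge> 0 \<Longrightarrow> \<sigma> (J0 n) (v ()) = 0" "\<sigma> Kc (v ()) = scale (of_int k) (v ())" "\<sigma> Dd (v ()) = 0"
  using rel_D0 unfolding rel_D0_def by blast+

lemma vacuum_power_Kc: "\<sigma> Kc (vacuum_power m) = scale (of_int k) (vacuum_power m)"
  by (induction m) (simp_all add: vacuum_power_0 vacuum_power_Suc vacuum_annihilated comm_Kc)

lemma vacuum_power_J0_0: "\<sigma> (J0 0) (vacuum_power m) = scale (2 * of_nat m) (vacuum_power m)"
proof (induction m)
  case 0 then show ?case by (simp add: vacuum_power_0 vacuum_annihilated)
next
  case (Suc m) then show ?case
    using comm_J0_Jp[of "vacuum_power m" 0 "-1"] by (simp add: vacuum_power_Suc algebra_simps)
qed

lemma vacuum_power_Jp: "n \<ge> 0 \<Longrightarrow> \<sigma> (Jp n) (vacuum_power m) = 0"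
proof (induction m)
  case 0 then show ?case by (simp add: vacuum_power_0 vacuum_annihilated)
next
  case (Suc m) then show ?case
    using comm_Jp_Jp[of "vacuum_power m" n "-1"] by (simp add: vacuum_power_Suc)
qed

lemma vacuum_power_J0: "n \<ge> 1 \<Longrightarrow> \<sigma> (J0 n) (vacuum_power m) = 0"
proof (induction m)
  case 0 then show ?case by (simp add: vacuum_power_0 vacuum_annihilated)
next
  case (Suc m) then show ?case
    using comm_J0_Jp[of "vacuum_power m" n "-1"] vacuum_power_Jp[of "n - 1" m]
    by (simp add: vacuum_power_Suc)
qed

lemma vacuum_power_Jm: "n \<ge> 2 \<Longrightarrow> \<sigma> (Jm n) (vacuum_power m) = 0"
proof (induction m)
  case 0 then show ?case by (simp add: vacuum_power_0 vacuum_annihilated)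
next
  case (Suc m) then show ?case
    using comm_Jp_Jm[of "vacuum_power m" "-1" n] vacuum_power_J0[of "n - 1" m]
    by (simp add: vacuum_power_Suc)
qed

lemma vacuum_power_Jm_1:
  "\<sigma> (Jm 1) (vacuum_power (Suc m)) = scale (- ((of_nat m + 1) * (of_nat m - of_int k))) (vacuum_power m)"
proof (induction m)
  case 0 then show ?case
    using comm_Jp_Jm[of "vacuum_power 0" "-1" 1] vacuum_power_J0_0[of 0] vacuum_power_Kc[of 0]
    by (simp add: vacuum_power_Suc vacuum_power_0 vacuum_annihilated vacuum_in)
next
  case (Suc m)
  let ?w = "vacuum_power (Suc m)"
  have "\<sigma> (Jm 1) (vacuum_power (Suc (Suc m)))
      = \<sigma> (Jp (-1)) (\<sigma> (Jm 1) ?w) - \<sigma> (J0 0) ?w + \<sigma> Kc ?w"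
    using comm_Jp_Jm[of ?w "-1" 1] by (simp add: vacuum_power_Suc algebra_simps)
  also have "\<dots> = scale (- ((of_nat m + 1) * (of_nat m - of_int k)) - 2 * of_nat (Suc m) + of_int k) ?w"
    unfolding Suc.IH vacuum_power_J0_0 vacuum_power_Kc
    by (simp add: vacuum_power_Suc scale_left_diff_distrib scale_left_distrib)
  also have "- ((of_nat m + 1) * (of_nat m - of_int k)) - 2 * of_nat (Suc m) + of_int k
      = - ((of_nat (Suc m) + 1) * (of_nat (Suc m) - (of_int k :: complex)))"
    by (simp add: algebra_simps)
  finally show ?case .
qed

lemma vacuum_power_Dd: "\<sigma> Dd (vacuum_power m) = scale (- of_nat m) (vacuum_power m)"
proof (induction m)
  case 0 then show ?case by (simp add: vacuum_power_0 vacuum_annihilated)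
next
  case (Suc m) then show ?case
    using comm_Dd_Jp[of "vacuum_power m" "-1"] by (simp add: vacuum_power_Suc algebra_simps)
qed

definition flowed_basis :: "nat \<Rightarrow> 'u" where
  "flowed_basis m = scale (of_real (dplus_norm k m)) (vacuum_power m)"

lemma flowed_basis_in: "flowed_basis m \<in> B"
  by (simp add: flowed_basis_def)

lemma flowed_basis_0: "flowed_basis 0 = v ()"
  by (simp add: flowed_basis_def vacuum_power_0)

lemma flowed_basis_raise:
  "\<sigma> (Jp (-1)) (flowed_basis m)
     = scale (of_real (sqrt ((real m + 1) * (real m - real_of_int k)))) (flowed_basis (m + 1))"
proof -
  define s where "s = sqrt ((real m + 1) * (real m - real_of_int k))"
  have "s > 0" using dplus_factor_pos[OF negative_level] by (simp add: s_def)
  then have "complex_of_real (dplus_norm k m) = of_real s * of_real (dplus_norm k (Suc m))"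
    by (simp flip: s_def)
  then show ?thesis by (simp add: flowed_basis_def vacuum_power_Suc s_def[symmetric] del: dplus_norm.simps)
qed

lemma flowed_basis_lower:
  "\<sigma> (Jm 1) (flowed_basis m)
     = scale (of_real (- sqrt (real m * (real m - 1 - real_of_int k)))) (flowed_basis (m - 1))"
proof (cases m)
  case 0 then show ?thesis by (simp add: flowed_basis_def vacuum_power_0 vacuum_annihilated)
next
  case (Suc m')
  define s where "s = sqrt ((real m' + 1) * (real m' - real_of_int k))"
  have P: "(real m' + 1) * (real m' - real_of_int k) > 0" by (rule dplus_factor_pos[OF negative_level])
  then have "s > 0" and s_sq: "s * s = (real m' + 1) * (real m' - real_of_int k)"
    by (simp_all add: s_def)
  have norm_Suc: "dplus_norm k (Suc m') = dplus_norm k m' / s" by (simp add: s_def)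
  have norm: "dplus_norm k (Suc m') * ((real m' + 1) * (real m' - real_of_int k)) = s * dplus_norm k m'"
    unfolding norm_Suc s_sq[symmetric] using \<open>s > 0\<close> by (simp add: field_simps)
  have "\<sigma> (Jm 1) (flowed_basis m)
      = scale (of_real (dplus_norm k (Suc m')) * (- ((of_nat m' + 1) * (of_nat m' - of_int k)))) (vacuum_power m')"
    by (simp add: Suc flowed_basis_def vacuum_power_Jm_1)
  also have "of_real (dplus_norm k (Suc m')) * (- ((of_nat m' + 1) * (of_nat m' - of_int k)))
      = (of_real (- (dplus_norm k (Suc m') * ((real m' + 1) * (real m' - real_of_int k)))) :: complex)"
    by simp
  also have "\<dots> = of_real (- s) * of_real (dplus_norm k m')" unfolding norm by simp
  finally show ?thesis by (simp add: Suc flowed_basis_def s_def algebra_simps)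
qed

lemma rel_Dplus_flowed_basis:
  "rel_Dplus scale (real_of_int k / 2) k (spectral_flow scale 1 \<sigma>) flowed_basis"
  unfolding rel_Dplus_def
proof (intro allI conjI impI)
  fix m :: nat and n :: int
  let ?\<sigma>1 = "spectral_flow scale 1 \<sigma>"
  show "?\<sigma>1 (J0 0) (flowed_basis m) = scale (of_real (2 * (real m - real_of_int k / 2))) (flowed_basis m)"
    by (simp add: flowed_basis_def vacuum_power_J0_0 vacuum_power_Kc algebra_simps)
  show "?\<sigma>1 (Jp 0) (flowed_basis m)
      = scale (of_real (sqrt ((real m + 1) * (real m - 2 * (real_of_int k / 2))))) (flowed_basis (m + 1))"
    using flowed_basis_raise by simp
  show "?\<sigma>1 (Jm 0) (flowed_basis m)
      = scale (of_real (- sqrt (real m * (real m - 1 - 2 * (real_of_int k / 2))))) (flowed_basis (m - 1))"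
    using flowed_basis_lower by simp
  show "?\<sigma>1 Kc (flowed_basis m) = scale (of_int k) (flowed_basis m)"
    by (simp add: flowed_basis_def vacuum_power_Kc scale_left_commute)
  show "?\<sigma>1 (Jp n) (flowed_basis m) = 0" "?\<sigma>1 (Jm n) (flowed_basis m) = 0"
    "?\<sigma>1 (J0 n) (flowed_basis m) = 0" if "1 \<le> n"
    using that by (simp_all add: flowed_basis_def vacuum_power_Jp vacuum_power_Jm vacuum_power_J0)
  show "?\<sigma>1 Dd (flowed_basis m)
      = scale (of_real (- (real_of_int k / 2 * (real_of_int k / 2 + 1) / (real_of_int k + 2)))) (flowed_basis m)"
    unfolding conformal_weight_half_level[OF noncritical_level]
    by (simp add: flowed_basis_def vacuum_power_Dd vacuum_power_J0_0 vacuum_power_Kc algebra_simps)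
qed

end

context complex_vector_space
begin

lemma rel_Dplus_image:
  assumes "aff_hom scale A \<rho> B \<sigma> \<phi>" "\<And>m. e m \<in> A" "rel_Dplus scale j k \<rho> e"
  shows "rel_Dplus scale j k \<sigma> (\<lambda>m. \<phi> (e m))"
proof -
  have "\<phi> (scale c (e m)) = scale c (\<phi> (e m))" "\<phi> (\<rho> x (e m)) = \<sigma> x (\<phi> (e m))" for c m x
    using assms(1,2) unfolding aff_hom_def by blast+
  moreover have "\<phi> 0 = 0" using calculation(1)[of 0 0] by simp
  ultimately show ?thesis using assms(3) unfolding rel_Dplus_def by metis
qed

lemma rel_Dplus_hom_images_eq:
  assumes \<psi>: "aff_hom scale B \<sigma> T \<tau> \<psi>" and p: "aff_hom scale A \<rho> T \<tau> p"
    and f: "rel_Dplus scale j k \<sigma> f" "\<And>m. f m \<in> B"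
    and e: "rel_Dplus scale j k \<rho> e" "\<And>m. e m \<in> A"
    and nonzero: "\<And>m::nat. sqrt ((real m + 1) * (real m - 2 * j)) \<noteq> 0"
    and base: "\<psi> (f 0) = p (e 0)"
  shows "\<psi> (f m) = p (e m)"
proof (induction m)
  case 0 then show ?case by (rule base)
next
  case (Suc m)
  define a where "a = complex_of_real (sqrt ((real m + 1) * (real m - 2 * j)))"
  have "a \<noteq> 0" using nonzero[of m] by (simp add: a_def)
  have f_raise: "\<sigma> (Jp 0) (f m) = scale a (f (m + 1))" using f(1) unfolding rel_Dplus_def a_def by blast
  have e_raise: "\<rho> (Jp 0) (e m) = scale a (e (m + 1))" using e(1) unfolding rel_Dplus_def a_def by blast
  have "scale a (\<psi> (f (Suc m))) = \<psi> (\<sigma> (Jp 0) (f m))"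
    using f_raise \<psi> f(2) unfolding aff_hom_def by simp
  also have "\<dots> = \<tau> (Jp 0) (p (e m))" using \<psi> f(2) Suc unfolding aff_hom_def by simp
  also have "\<dots> = p (\<rho> (Jp 0) (e m))" using p e(2) unfolding aff_hom_def by metis
  also have "\<dots> = scale a (p (e (Suc m)))" using e_raise p e(2) unfolding aff_hom_def by simp
  finally have "scale (inverse a) (scale a (\<psi> (f (Suc m)))) = scale (inverse a) (scale a (p (e (Suc m))))"
    by simp
  then show ?case using \<open>a \<noteq> 0\<close> by simp
qed

end

context aff_rep
begin

lemma rel_D0_flowed_image:
  assumes e: "rel_Dplus scale (real_of_int k / 2) k \<rho> e" "\<And>m. e m \<in> A" and "k \<noteq> -2"
    and p: "aff_hom scale A \<rho> T \<tau> p" and kills: "p (\<rho> (Jm (-1)) (e 0)) = 0"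
  shows "rel_D0 scale k (spectral_flow scale (-1) \<tau>) (\<lambda>_. p (e 0))"
proof -
  have e0: "\<rho> (J0 0) (e 0) = scale (- of_int k) (e 0)" "\<rho> (Jm 0) (e 0) = 0"
    "\<rho> Kc (e 0) = scale (of_int k) (e 0)"
    "\<And>n. n \<ge> 1 \<Longrightarrow> \<rho> (Jp n) (e 0) = 0 \<and> \<rho> (Jm n) (e 0) = 0 \<and> \<rho> (J0 n) (e 0) = 0"
    "\<rho> Dd (e 0) = scale (- of_int k / 4) (e 0)"
    using e(1) unfolding rel_Dplus_def conformal_weight_half_level[OF assms(3)]
    by (auto dest: spec[of _ 0])
  have \<tau>_e0: "\<tau> x (p (e 0)) = p (\<rho> x (e 0))" for x using aff_hom_act[OF p e(2)] by simp
  have p_scale_e0: "p (scale c (e 0)) = scale c (p (e 0))" for c using aff_hom_scale[OF p e(2)] .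
  note p_0 = aff_hom_zero[OF p]
  show ?thesis
    unfolding rel_D0_def
  proof (intro allI conjI impI)
    fix n :: int assume "n \<ge> 0"
    then show "spectral_flow scale (-1) \<tau> (Jp n) (p (e 0)) = 0"
      using e0(4)[of "n + 1"] by (simp add: \<tau>_e0 p_0)
    show "spectral_flow scale (-1) \<tau> (Jm n) (p (e 0)) = 0"
    proof -
      consider "n = 0" | "n = 1" | "n \<ge> 2" using \<open>n \<ge> 0\<close> by linarith
      then show ?thesis
        by cases (use kills e0(2) e0(4)[of "n - 1"] in \<open>simp_all add: \<tau>_e0 p_0\<close>)
    qed
    show "spectral_flow scale (-1) \<tau> (J0 n) (p (e 0)) = 0"
    proof (cases "n = 0")
      case True then show ?thesis
        using e0(1,3) e(2) by (simp add: \<tau>_e0 p_scale_e0 aff_hom_neg[OF p])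
    next
      case False then show ?thesis using e0(4)[of n] \<open>n \<ge> 0\<close> by (simp add: \<tau>_e0 p_0)
    qed
  next
    show "spectral_flow scale (-1) \<tau> Kc (p (e 0)) = scale (of_int k) (p (e 0))"
      using e0(3) by (simp add: \<tau>_e0 p_scale_e0)
    show "spectral_flow scale (-1) \<tau> Dd (p (e 0)) = 0"
      using e0(1,3,5) e(2)
      by (simp add: \<tau>_e0 p_scale_e0 aff_hom_neg[OF p] scale_left_distrib[symmetric]
          scale_left_diff_distrib[symmetric])
  qed
qed

lemma flowed_vacuum_hom_to_image:
  assumes PB: "is_prolongation scale B \<sigma> v (rel_D0 scale k)" and "k \<noteq> -2"
    and e: "rel_Dplus scale (real_of_int k / 2) k \<rho> e" "\<And>m. e m \<in> A"
    and T: "aff_module scale T \<tau>" and p: "aff_hom scale A \<rho> T \<tau> p"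
    and kills: "p (\<rho> (Jm (-1)) (e 0)) = 0"
  obtains \<psi> where "aff_hom scale B (spectral_flow scale 1 \<sigma>) T \<tau> \<psi>" "\<psi> (v ()) = p (e 0)"
proof -
  interpret T: aff_rep scale T \<tau> using T by (rule aff_repI)
  have B: "aff_module scale B \<sigma>" using PB unfolding is_prolongation_def by blast
  obtain \<psi> where \<psi>: "aff_hom scale B \<sigma> T (spectral_flow scale (-1) \<tau>) \<psi>" and "\<psi> (v ()) = p (e 0)"
    using is_prolongation_hom_exists[of scale B \<sigma> v "rel_D0 scale k" T "spectral_flow scale (-1) \<tau>"
        "\<lambda>_. p (e 0)", OF PB T.spectral_flow_module aff_hom_in[OF p e(2)]
        rel_D0_flowed_image[OF e assms(2) p kills]]
    by blast
  moreover have "aff_hom scale B (spectral_flow scale 1 \<sigma>) T \<tau> \<psi>"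
    using aff_rep.aff_hom_spectral_flow[OF aff_repI[OF B] \<psi>, of 1]
    by (simp add: spectral_flow_inverse[of 1, simplified])
  ultimately show thesis using that by blast
qed

end

context complex_vector_space
begin

lemma dplus_hom_factors_through_flowed_vacuum:
  assumes level: "k < 0" "k \<noteq> -2"
    and PA: "is_prolongation scale A \<rho> e (rel_Dplus scale (real_of_int k / 2) k)"
    and PB: "is_prolongation scale B \<sigma> v (rel_D0 scale k)"
    and \<phi>: "aff_hom scale A \<rho> B (spectral_flow scale 1 \<sigma>) \<phi>" and \<phi>_e0: "\<phi> (e 0) = v ()"
    and T: "aff_module scale T \<tau>" and p: "aff_hom scale A \<rho> T \<tau> p"
    and kills: "p (\<rho> (Jm (-1)) (e 0)) = 0"
  obtains \<psi> where "aff_hom scale B (spectral_flow scale 1 \<sigma>) T \<tau> \<psi>" "\<And>u. u \<in> A \<Longrightarrow> \<psi> (\<phi> u) = p u"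
proof -
  have A: "aff_module scale A \<rho>" and e: "\<And>m. e m \<in> A"
    and rel_e: "rel_Dplus scale (real_of_int k / 2) k \<rho> e"
    using PA unfolding is_prolongation_def by blast+
  interpret A: aff_rep scale A \<rho> using A by (rule aff_repI)
  obtain \<psi> where \<psi>: "aff_hom scale B (spectral_flow scale 1 \<sigma>) T \<tau> \<psi>" and \<psi>_v: "\<psi> (v ()) = p (e 0)"
    using A.flowed_vacuum_hom_to_image[OF PB level(2) rel_e e T p kills] by blast
  have "\<psi> (\<phi> u) = p u" if "u \<in> A" for u
  proof (rule is_prolongation_hom_unique[of scale A \<rho> e _ T \<tau> "\<lambda>m. p (e m)" "\<lambda>u. \<psi> (\<phi> u)" p u,
        OF PA T _ rel_Dplus_image[OF p e rel_e] aff_hom_comp[OF \<phi> \<psi>] _ p _ that])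
    show "p (e m) \<in> T" for m using A.aff_hom_in[OF p e] .
    have "sqrt ((real n + 1) * (real n - 2 * (real_of_int k / 2))) \<noteq> 0" for n
      using level(1) by simp
    moreover have "\<psi> (\<phi> (e 0)) = p (e 0)" using \<phi>_e0 \<psi>_v by simp
    ultimately show "\<psi> (\<phi> (e m)) = p (e m)" for m
      by (rule rel_Dplus_hom_images_eq[OF aff_hom_comp[OF \<phi> \<psi>] p rel_e e rel_e e])
  qed simp
  with \<psi> show thesis using that by blast
qed

lemma dplus_prolongation_onto_flowed_vacuum:
  assumes level: "k < 0" "k \<noteq> -2"
    and PA: "is_prolongation scale A \<rho> e (rel_Dplus scale (real_of_int k / 2) k)"
    and PB: "is_prolongation scale B \<sigma> v (rel_D0 scale k)"
  shows "\<exists>\<phi>. aff_hom scale A \<rho> B (spectral_flow scale 1 \<sigma>) \<phi> \<and> \<phi> ` A = B \<and>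
           {x\<in>A. \<phi> x = 0} = gen_submodule scale A \<rho> (\<rho> (Jm (-1)) (e 0))"
proof -
  have A: "aff_module scale A \<rho>" and e: "\<And>m. e m \<in> A"
    using PA unfolding is_prolongation_def by blast+
  have B: "aff_module scale B \<sigma>" and v: "v () \<in> B" and rel_v: "rel_D0 scale k \<sigma> v"
    using PB unfolding is_prolongation_def by blast+
  interpret A: aff_rep scale A \<rho> using A by (rule aff_repI)
  interpret V: vacuum_rep scale B \<sigma> k v
    using B rel_v v level by unfold_locales (simp_all add: aff_rep_axioms_def)
  define \<sigma>1 where "\<sigma>1 = spectral_flow scale 1 \<sigma>"
  have B1: "aff_module scale B \<sigma>1" unfolding \<sigma>1_def by (rule V.spectral_flow_module)
  obtain \<phi> where \<phi>: "aff_hom scale A \<rho> B \<sigma>1 \<phi>" and \<phi>_e: "\<And>m. \<phi> (e m) = V.flowed_basis m"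
    using is_prolongation_hom_exists[of scale A \<rho> e _ B \<sigma>1 V.flowed_basis, OF PA B1 V.flowed_basis_in
        V.rel_Dplus_flowed_basis[folded \<sigma>1_def]]
    by blast
  have \<phi>_e0: "\<phi> (e 0) = v ()" by (simp add: \<phi>_e V.flowed_basis_0)
  define w where "w = \<rho> (Jm (-1)) (e 0)"
  define W where "W = gen_submodule scale A \<rho> w"
  have w: "w \<in> A" unfolding w_def using e by simp
  have "\<phi> w = 0"
    using A.aff_hom_act[OF \<phi> e[of 0], of "Jm (-1)"] V.vacuum_annihilated(2)[of 0]
    by (simp add: w_def \<phi>_e0 \<sigma>1_def)
  obtain T p where "T \<subseteq> A" and T: "aff_module scale T (\<lambda>x t. p (\<rho> x t))"
    and p: "aff_hom scale A \<rho> T (\<lambda>x t. p (\<rho> x t)) p"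
    and p_zero: "\<And>u. u \<in> A \<Longrightarrow> p u = 0 \<longleftrightarrow> u \<in> W" and p_diff: "\<And>u. u \<in> A \<Longrightarrow> u - p u \<in> W"
    using A.exists_quotient_module[OF A.aff_submodule_gen_submodule[OF w]] unfolding W_def by blast
  have "p w = 0" using p_zero w A.generator_in_gen_submodule unfolding W_def by blast
  then obtain \<psi> where \<psi>: "aff_hom scale B \<sigma>1 T (\<lambda>x t. p (\<rho> x t)) \<psi>"
    and \<psi>_\<phi>: "\<And>u. u \<in> A \<Longrightarrow> \<psi> (\<phi> u) = p u"
    using dplus_hom_factors_through_flowed_vacuum[OF level PA PB \<phi>[unfolded \<sigma>1_def] \<phi>_e0 T p]
    unfolding \<sigma>1_def w_def by blast
  have kernel: "{x\<in>A. \<phi> x = 0} = W"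
    using A.kernel_eq_gen_submodule[OF \<phi> B1 w \<open>\<phi> w = 0\<close> \<psi>_\<phi> aff_rep.aff_hom_zero[OF aff_repI[OF B1] \<psi>]]
      p_zero
    unfolding W_def by blast
  then have \<phi>_p: "\<phi> (u - p u) = 0" if "u \<in> A" for u using p_diff[OF that] by blast
  have "aff_hom scale B \<sigma>1 B \<sigma>1 (\<lambda>b. \<phi> (\<psi> b))"
    using aff_hom_comp[OF \<psi> A.aff_hom_quotient_factor[OF \<phi> p \<open>T \<subseteq> A\<close>]] \<phi>_p by blast
  moreover have "\<phi> (\<psi> (v i)) = v i" for i
  proof -
    have "p (e 0) \<in> A" using A.aff_hom_in[OF p e[of 0]] \<open>T \<subseteq> A\<close> by blast
    then have "\<phi> (p (e 0)) = \<phi> (e 0)" using \<phi>_p[OF e[of 0]] A.aff_hom_diff[OF \<phi> e[of 0]] by simp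
    then show ?thesis using \<psi>_\<phi>[OF e[of 0]] \<phi>_e0 by simp
  qed
  ultimately have \<phi>_\<psi>: "\<phi> (\<psi> b) = b" if "b \<in> B" for b
    using is_prolongation_flowed_endo_eq_id[OF PB _ _ that, of 1 "\<lambda>b. \<phi> (\<psi> b)"]
    unfolding \<sigma>1_def by blast
  have "\<phi> ` A = B"
  proof
    show "\<phi> ` A \<subseteq> B" using A.aff_hom_in[OF \<phi>] by blast
    show "B \<subseteq> \<phi> ` A"
    proof
      fix b assume "b \<in> B"
      then have "\<psi> b \<in> A" using aff_rep.aff_hom_in[OF aff_repI[OF B1] \<psi>] \<open>T \<subseteq> A\<close> by blast
      then show "b \<in> \<phi> ` A" using \<phi>_\<psi>[OF \<open>b \<in> B\<close>] by (metis image_eqI)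
    qed
  qed
  with \<phi> kernel show ?thesis unfolding \<sigma>1_def W_def w_def by blast
qed

end

theorem proposition3p11:
  fixes scale :: "complex \<Rightarrow> 'u::ab_group_add \<Rightarrow> 'u" and k :: int
    and Ap Am B :: "'u set" and \<rho>p \<rho>m \<sigma> :: "gen \<Rightarrow> 'u \<Rightarrow> 'u"
    and ep em :: "nat \<Rightarrow> 'u" and v :: "unit \<Rightarrow> 'u"
  assumes "vector_space scale"
    and "k < -2"
    and "is_prolongation scale Ap \<rho>p ep (rel_Dplus scale (real_of_int k / 2) k)"
    and "is_prolongation scale Am \<rho>m em (rel_Dminus scale (real_of_int k / 2) k)"
    and "is_prolongation scale B \<sigma> v (rel_D0 scale k)"
  shows "(\<exists>\<phi>. aff_hom scale Ap \<rho>p B (spectral_flow scale 1 \<sigma>) \<phi> \<and> \<phi> ` Ap = B \<and>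
             {x\<in>Ap. \<phi> x = 0} = gen_submodule scale Ap \<rho>p (\<rho>p (Jm (-1)) (ep 0)))
       \<and> (\<exists>\<phi>. aff_hom scale Am \<rho>m B (spectral_flow scale (-1) \<sigma>) \<phi> \<and> \<phi> ` Am = B \<and>
             {x\<in>Am. \<phi> x = 0} = gen_submodule scale Am \<rho>m (\<rho>m (Jp (-1)) (em 0)))"
proof -
  interpret complex_vector_space scale using assms(1) by (rule complex_vector_space.intro)
  have level: "k < 0" "k \<noteq> -2" using assms(2) by simp_all
  have PM: "is_prolongation scale Am (pm_swap \<rho>m) em (rel_Dplus scale (real_of_int k / 2) k)"
    by (rule is_prolongation_pm_swap[OF assms(4)]) (simp flip: rel_Dplus_pm_swap)
  have PB: "is_prolongation scale B (pm_swap \<sigma>) v (rel_D0 scale k)"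
    by (rule is_prolongation_pm_swap[OF assms(5)]) (simp add: rel_D0_pm_swap)
  obtain \<phi> where \<phi>: "aff_hom scale Am (pm_swap \<rho>m) B (pm_swap (spectral_flow scale (-1) \<sigma>)) \<phi>"
    and onto: "\<phi> ` Am = B"
    and kernel: "{x\<in>Am. \<phi> x = 0} = gen_submodule scale Am (pm_swap \<rho>m) (pm_swap \<rho>m (Jm (-1)) (em 0))"
    using dplus_prolongation_onto_flowed_vacuum[OF level PM PB] by (auto simp: spectral_flow_pm_swap)
  have "aff_module scale Am \<rho>m" using assms(4) unfolding is_prolongation_def by blast
  then interpret M: aff_rep scale Am "pm_swap \<rho>m" by (intro aff_repI aff_rep.pm_swap_module[OF aff_repI])
  have "aff_hom scale Am \<rho>m B (spectral_flow scale (-1) \<sigma>) \<phi>"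
    using M.aff_hom_pm_swap[OF \<phi>] by simp
  with onto kernel show ?thesis
    using dplus_prolongation_onto_flowed_vacuum[OF level assms(3,5)]
    by (auto simp: gen_submodule_pm_swap)
qed

end
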